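(* Let $\mathcal X_{aux}\subset\mathbb R^n$ be a set divided into distinct semantic groups $\mathcal X_{aux}=\mathcal X^{y_1}\cup\cdots\cup\mathcal X^{y_m}$, where each group $\mathcal X^{y_i}$ consists of the points with semantic label $y_i$, and at least two groups with different labels are nonempty. Suppose the following semantic-change assumption holds: there exists $\zeta>0$ such that for any $x_i\in\mathcal X^{y_i}$, $x_j\in\mathcal X^{y_j}$ with $y_i\neq y_j$ and any $\lambda$ with $\zeta<\lambda<1-\zeta$, the point $\hat x=\lambda x_i+(1-\lambda)x_j$ belongs to neither $\mathcal X^{y_i}$ nor $\mathcal X^{y_j}$. Define $$\mathcal G\mathcal X_{aux}=\{\hat x\mid \hat x=\lambda x_1+(1-\lambda)x_2,\ x_1,x_2\in\mathcal X_{aux},\ \lambda\in[0,1]\}.$$ Then $\mathcal X_{aux}\subset\mathcal G\mathcal X_{aux}$ (proper inclusion).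
   Context: $\mathcal X_{aux}$ is the input space of auxiliary outliers used for OOD detection training; $\mathcal G\mathcal X_{aux}$ is the space obtained by applying all mixup transforms (all pairs of points and all interpolation weights $\lambda\in[0,1]$) to it. Semantic labels of points partition $\mathcal X_{aux}$ into the groups $\mathcal X^{y_i}$. *)

theory Defs
  imports "HOL-Analysis.Analysis"
begin

definition sem_group :: "('a \<Rightarrow> 'l) \<Rightarrow> 'a set \<Rightarrow> 'l \<Rightarrow> 'a set" where
  "sem_group lab X y = {x \<in> X. lab x = y}"

definition mixup_space :: "('a::real_vector) set \<Rightarrow> 'a set" where
  "mixup_space X = {lam *\<^sub>R x1 + (1 - lam) *\<^sub>R x2 | x1 x2 lam.
                      x1 \<in> X \<and> x2 \<in> X \<and> lam \<in> {0..1}}"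

end

theory Submission
  imports Defs
begin

text \<open>If X were equal to its mixup space it would be convex, so the labelling restricted to
the segment joining two differently labelled points would be a function on [0, 1] with
finitely many values in which any two points with different labels enclose a middle window labelled
differently from both. This is impossible, by induction on the number of labels on a subinterval:
if the window of [a, b] carries two labels, a subinterval of it has fewer labels (it
misses that of a); if the window carries a single label, that label differs from the one of a,
and the supremum of the points left of the midpoint with another label is pushed to the right by
taking midpoints.\<close>

definition mixing_separates :: "real \<Rightarrow> ('a::real_vector \<Rightarrow> 'l) \<Rightarrow> 'a set \<Rightarrow> bool" where
  "mixing_separates \<zeta> lab S \<longleftrightarrow>
     (\<forall>x\<in>S. \<forall>y\<in>S. lab x \<noteq> lab y \<longrightarrow> (\<forall>lam. \<zeta> < lam \<and> lam < 1 - \<zeta> \<longrightarrow>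
        lab (lam *\<^sub>R x + (1 - lam) *\<^sub>R y) \<noteq> lab x \<and>
        lab (lam *\<^sub>R x + (1 - lam) *\<^sub>R y) \<noteq> lab y))"

lemma mixing_separates_subset:
  "mixing_separates \<zeta> lab S \<Longrightarrow> T \<subseteq> S \<Longrightarrow> mixing_separates \<zeta> lab T"
  unfolding mixing_separates_def by blast

lemma mixing_separates_midpoint:
  assumes "mixing_separates \<zeta> lab S" "\<zeta> < 1/2" "x \<in> S" "y \<in> S" "lab x \<noteq> lab y"
  shows "lab ((1/2) *\<^sub>R x + (1/2) *\<^sub>R y) \<noteq> lab y"
proof -
  have "\<forall>lam. \<zeta> < lam \<and> lam < 1 - \<zeta> \<longrightarrow> lab (lam *\<^sub>R x + (1 - lam) *\<^sub>R y) \<noteq> lab y"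
    using assms unfolding mixing_separates_def by blast
  from this[rule_format, of "1/2"] show ?thesis
    using assms(2) by simp
qed

lemma mixing_separates_window:
  fixes g :: "real \<Rightarrow> 'l"
  assumes sep: "mixing_separates \<zeta> g S" and "a \<in> S" "b \<in> S" "a < b" "g a \<noteq> g b"
    and s: "a + \<zeta> * (b - a) < s" "s < b - \<zeta> * (b - a)"
  shows "g s \<noteq> g a \<and> g s \<noteq> g b"
proof -
  define lam where "lam = (b - s) / (b - a)"
  have "\<zeta> < lam" "lam < 1 - \<zeta>"
    using s \<open>a < b\<close> by (auto simp: lam_def field_simps)
  moreover have "lam * (b - a) = b - s"
    using \<open>a < b\<close> by (simp add: lam_def)
  then have "lam * a + (1 - lam) * b = s"
    by (simp add: algebra_simps)
  ultimately show ?thesis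
    using sep assms(2-5) unfolding mixing_separates_def by force
qed

text \<open>The midpoint of a point with a foreign label and m again has a foreign label, so the
supremum of such points left of m cannot lie below m.\<close>

lemma mixing_separates_not_constant_left_of:
  fixes g :: "real \<Rightarrow> 'l"
  assumes sep: "mixing_separates \<zeta> g {a..m}" and "\<zeta> < 1/2"
    and "a < m" "lo < m" "g a \<noteq> g m"
  shows "\<exists>s\<in>{lo<..<m}. g s \<noteq> g m"
proof (rule ccontr)
  assume const: "\<not> ?thesis"
  define N where "N = {s \<in> {a..m}. g s \<noteq> g m}"
  have "a \<in> N"
    using assms by (simp add: N_def)
  have bdd: "bdd_above N"
    by (rule bdd_aboveI[of _ m]) (auto simp: N_def)
  have "s \<le> lo" if "s \<in> N" for s
    using that const by (force simp: N_def)
  then have "Sup N < m"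
    using \<open>a \<in> N\<close> \<open>lo < m\<close> cSup_least[of N lo] by fastforce
  then have "2 * Sup N - m < Sup N"
    by simp
  then obtain x where "x \<in> N" "2 * Sup N - m < x"
    using less_cSup_iff[OF _ bdd] \<open>a \<in> N\<close> by blast
  define y where "y = (1/2) * x + (1/2) * m"
  have "g y \<noteq> g m"
    using mixing_separates_midpoint[OF sep \<open>\<zeta> < 1/2\<close>, of x m] \<open>x \<in> N\<close> \<open>a < m\<close>
    by (simp add: y_def N_def)
  moreover have "y \<in> {a..m}"
    using \<open>x \<in> N\<close> by (simp add: y_def N_def)
  ultimately have "y \<le> Sup N"
    using bdd by (intro cSup_upper) (simp_all add: N_def)
  with \<open>2 * Sup N - m < x\<close> show False
    by (simp add: y_def)
qed

lemma mixing_separates_interval_endpoints: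
  fixes g :: "real \<Rightarrow> 'l"
  assumes "finite (g ` {a..b})" "mixing_separates \<zeta> g {a..b}" "0 < \<zeta>" "\<zeta> < 1/2" "a \<le> b"
  shows "g a = g b"
  using assms(1,2,5)
proof (induction "card (g ` {a..b})" arbitrary: a b rule: less_induct)
  case less
  show "g a = g b"
  proof (rule ccontr)
    assume "g a \<noteq> g b"
    then have "a < b"
      using less.prems(3) by (cases "a = b") auto
    define lo where "lo = a + \<zeta> * (b - a)"
    define hi where "hi = b - \<zeta> * (b - a)"
    define m where "m = (a + b) / 2"
    have "0 < (b - a) * (1 - 2 * \<zeta>)"
      using \<open>a < b\<close> \<open>\<zeta> < 1/2\<close> by simp
    then have bounds: "a < lo" "lo < m" "m < hi" "hi < b"
      using \<open>a < b\<close> \<open>0 < \<zeta>\<close> by (auto simp: lo_def hi_def m_def field_simps)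
    have window: "g s \<noteq> g a \<and> g s \<noteq> g b" if "lo < s" "s < hi" for s
      using mixing_separates_window[OF less.prems(2), of a b s] \<open>a < b\<close> \<open>g a \<noteq> g b\<close> that
      by (simp add: lo_def hi_def)
    show False
    proof (cases "\<exists>p q. lo < p \<and> p \<le> q \<and> q < hi \<and> g p \<noteq> g q")
      case True
      then obtain p q where pq: "lo < p" "p \<le> q" "q < hi" "g p \<noteq> g q"
        by blast
      have sub: "{p..q} \<subseteq> {a..b}"
        using pq bounds by auto
      have "g ` {p..q} \<subseteq> g ` {a..b} - {g a}"
        using sub window pq by fastforce
      moreover have "g a \<in> g ` {a..b}"
        using \<open>a < b\<close> by simp
      ultimately have "g ` {p..q} \<subset> g ` {a..b}"
        by blast
      then have "card (g ` {p..q}) < card (g ` {a..b})"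
        by (rule psubset_card_mono[OF less.prems(1)])
      moreover have "finite (g ` {p..q})"
        using less.prems(1) sub by (meson finite_subset image_mono)
      ultimately have "g p = g q"
        using less.hyps mixing_separates_subset[OF less.prems(2) sub] pq by blast
      with pq show False
        by simp
    next
      case False
      have "mixing_separates \<zeta> g {a..m}"
        using mixing_separates_subset[OF less.prems(2)] bounds by auto
      moreover have "g a \<noteq> g m"
        using window[of m] bounds by auto
      ultimately obtain s where "lo < s" "s < m" "g s \<noteq> g m"
        using mixing_separates_not_constant_left_of[of \<zeta> g a m lo] \<open>\<zeta> < 1/2\<close> bounds by auto
      with False \<open>m < hi\<close> show False
        by (meson less_imp_le)
    qed
  qed
qed

lemma mixing_separates_segment:
  assumes "convex S" "mixing_separates \<zeta> lab S" "x \<in> S" "y \<in> S"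
  shows "mixing_separates \<zeta> (\<lambda>s. lab (s *\<^sub>R x + (1 - s) *\<^sub>R y)) {0..1}"
proof -
  define \<gamma> where "\<gamma> s = s *\<^sub>R x + (1 - s) *\<^sub>R y" for s :: real
  have "\<gamma> s \<in> S" if "s \<in> {0..1}" for s
    using convexD[OF assms(1,3,4)] that by (simp add: \<gamma>_def)
  moreover have "\<gamma> (lam * s + (1 - lam) * t) = lam *\<^sub>R \<gamma> s + (1 - lam) *\<^sub>R \<gamma> t" for lam s t
    by (simp add: \<gamma>_def algebra_simps)
  ultimately show ?thesis
    using assms(2) unfolding mixing_separates_def \<gamma>_def[symmetric] by (metis real_scaleR_def)
qed

lemma convex_mixing_separates_const:
  assumes "convex S" "finite (lab ` S)" "mixing_separates \<zeta> lab S" "0 < \<zeta>" "\<zeta> < 1/2"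
    and "x \<in> S" "y \<in> S"
  shows "lab x = lab y"
proof -
  define g where "g s = lab (s *\<^sub>R x + (1 - s) *\<^sub>R y)" for s :: real
  have "g ` {0..1} \<subseteq> lab ` S"
    using convexD[OF assms(1,6,7)] by (auto simp: g_def)
  then have "finite (g ` {0..1})"
    using assms(2) finite_subset by blast
  moreover have "mixing_separates \<zeta> g {0..1}"
    unfolding g_def using mixing_separates_segment assms by blast
  ultimately have "g 1 = g 0"
    using mixing_separates_interval_endpoints[of g 0 1] assms(4,5) by force
  then show ?thesis
    by (simp add: g_def)
qed

lemma subset_mixup_space: "X \<subseteq> mixup_space X"
proof
  fix x assume "x \<in> X"
  then show "x \<in> mixup_space X"
    unfolding mixup_space_def by (force intro: exI[of _ 1])
qed

lemma convex_if_mixup_space_subset: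
  assumes "mixup_space X \<subseteq> X"
  shows "convex X"
proof (rule convexI)
  fix x y and u v :: real
  assume "x \<in> X" "y \<in> X" "0 \<le> u" "0 \<le> v" "u + v = 1"
  then have "u *\<^sub>R x + v *\<^sub>R y \<in> mixup_space X"
    unfolding mixup_space_def by force
  with assms show "u *\<^sub>R x + v *\<^sub>R y \<in> X"
    by blast
qed

theorem lemma1:
  fixes X :: "(real ^ 'n) set" and lab :: "real ^ 'n \<Rightarrow> 'l"
  assumes finite_labels: "finite (lab ` X)"
    and two_groups: "\<exists>x1\<in>X. \<exists>x2\<in>X. lab x1 \<noteq> lab x2"
    and semantic_change: "\<exists>\<zeta>::real. 0 < \<zeta> \<and> \<zeta> < 1/2 \<and>
       (\<forall>xi\<in>X. \<forall>xj\<in>X. lab xi \<noteq> lab xj \<longrightarrow>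
          (\<forall>lam::real. \<zeta> < lam \<and> lam < 1 - \<zeta> \<longrightarrow>
             lam *\<^sub>R xi + (1 - lam) *\<^sub>R xj \<notin> sem_group lab X (lab xi) \<and>
             lam *\<^sub>R xi + (1 - lam) *\<^sub>R xj \<notin> sem_group lab X (lab xj)))"
  shows "X \<subset> mixup_space X"
proof -
  have "X \<noteq> mixup_space X"
  proof
    assume "X = mixup_space X"
    then have "convex X"
      by (metis convex_if_mixup_space_subset order_refl)
    obtain \<zeta> where "0 < \<zeta>" "\<zeta> < 1/2" and change: "\<forall>xi\<in>X. \<forall>xj\<in>X. lab xi \<noteq> lab xj \<longrightarrow>
          (\<forall>lam::real. \<zeta> < lam \<and> lam < 1 - \<zeta> \<longrightarrow>
             lam *\<^sub>R xi + (1 - lam) *\<^sub>R xj \<notin> sem_group lab X (lab xi) \<and>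
             lam *\<^sub>R xi + (1 - lam) *\<^sub>R xj \<notin> sem_group lab X (lab xj))"
      using semantic_change by blast
    have "mixing_separates \<zeta> lab X"
      unfolding mixing_separates_def
      using change convexD[OF \<open>convex X\<close>] \<open>0 < \<zeta>\<close> by (fastforce simp: sem_group_def)
    then show False
      using convex_mixing_separates_const[OF \<open>convex X\<close> finite_labels] two_groups
        \<open>0 < \<zeta>\<close> \<open>\<zeta> < 1/2\<close> by blast
  qed
  then show ?thesis
    using subset_mixup_space by blast
qed

end
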